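(* $URD(12;K_2,S(C_3))\supseteq J(12)=\{(3,4),(7,2),(11,0)\}$; that is, for each $(r,s)\in\{(3,4),(7,2),(11,0)\}$ there exists a partition of the edge set of $K_{12}$ into $r$ 1-factors and $s$ classes each consisting of two vertex-disjoint 3-suns covering all twelve vertices.
   Context: A 3-sun is the graph on $6$ distinct vertices $a_1,a_2,a_3,b_1,b_2,b_3$ consisting of the triangle $(a_1,a_2,a_3)$ together with the edges $\{a_i,b_i\}$, $i=1,2,3$. $URD(v;K_2,S(C_3))$ denotes the set of pairs $(r,s)$ such that the edge set of $K_v$ can be partitioned into $r$ 1-factors and $s$ classes each of which is a set of vertex-disjoint 3-suns covering every vertex exactly once. *)

theory Defs
  imports Main
begin

definition complete_edges :: "'a set \<Rightarrow> 'a set set" where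
  "complete_edges V = {{x, y} | x y. x \<in> V \<and> y \<in> V \<and> x \<noteq> y}"

definition one_factor :: "'a set \<Rightarrow> 'a set set \<Rightarrow> bool" where
  "one_factor V M \<longleftrightarrow> M \<subseteq> complete_edges V \<and> (\<forall>v\<in>V. \<exists>!e. e \<in> M \<and> v \<in> e)"

text \<open>A 3-sun is given by a 6-tuple (a1,a2,a3,b1,b2,b3) of distinct vertices:
  triangle (a1,a2,a3) plus pendant edges a_i b_i.\<close>
type_synonym 'a sun = "'a \<times> 'a \<times> 'a \<times> 'a \<times> 'a \<times> 'a"

fun sun_verts :: "'a sun \<Rightarrow> 'a set" where
  "sun_verts (a1, a2, a3, b1, b2, b3) = {a1, a2, a3, b1, b2, b3}"

fun sun_edges :: "'a sun \<Rightarrow> 'a set set" where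
  "sun_edges (a1, a2, a3, b1, b2, b3) =
     {{a1, a2}, {a2, a3}, {a1, a3}, {a1, b1}, {a2, b2}, {a3, b3}}"

fun is_sun :: "'a sun \<Rightarrow> bool" where
  "is_sun (a1, a2, a3, b1, b2, b3) = distinct [a1, a2, a3, b1, b2, b3]"

definition sun_class :: "'a set \<Rightarrow> 'a sun set \<Rightarrow> bool" where
  "sun_class V P \<longleftrightarrow> (\<forall>t\<in>P. is_sun t \<and> sun_verts t \<subseteq> V) \<and>
     (\<forall>v\<in>V. \<exists>!t. t \<in> P \<and> v \<in> sun_verts t)"

definition class_edges :: "'a sun set \<Rightarrow> 'a set set" where
  "class_edges P = (\<Union>t\<in>P. sun_edges t)"

definition URD_decomp :: "'a set \<Rightarrow> nat \<Rightarrow> nat \<Rightarrow> bool" where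
  "URD_decomp V r s \<longleftrightarrow>
    (\<exists>(M :: nat \<Rightarrow> 'a set set) (P :: nat \<Rightarrow> 'a sun set).
       (\<forall>i<r. one_factor V (M i)) \<and>
       (\<forall>j<s. sun_class V (P j)) \<and>
       (\<forall>i<r. \<forall>i'<r. i \<noteq> i' \<longrightarrow> M i \<inter> M i' = {}) \<and>
       (\<forall>j<s. \<forall>j'<s. j \<noteq> j' \<longrightarrow> class_edges (P j) \<inter> class_edges (P j') = {}) \<and>
       (\<forall>i<r. \<forall>j<s. M i \<inter> class_edges (P j) = {}) \<and>
       (\<Union>i<r. M i) \<union> (\<Union>j<s. class_edges (P j)) = complete_edges V)"

definition URD :: "nat \<Rightarrow> (nat \<times> nat) set" where
  "URD v = {(r, s). URD_decomp {0..<v} r s}"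

end

theory Submission
  imports Defs
begin

text \<open>The three decompositions are exhibited explicitly and checked by evaluation. Checking
  disjointness and covering separately is unnecessary: if the edges of the given 1-factors and
  sun classes, listed together, are pairwise distinct and number \<open>card V choose 2\<close>, then, being
  edges of \<open>K_V\<close>, they are exactly all edges of \<open>K_V\<close>, each occurring once.\<close>

fun edge :: "'a \<times> 'a \<Rightarrow> 'a set" where
  "edge (a, b) = {a, b}"

definition edge_set :: "('a \<times> 'a) list \<Rightarrow> 'a set set" where
  "edge_set L = edge ` set L"

fun sun_edge_list :: "'a sun \<Rightarrow> ('a \<times> 'a) list" where
  "sun_edge_list (a1, a2, a3, b1, b2, b3) =
     [(a1, a2), (a2, a3), (a1, a3), (a1, b1), (a2, b2), (a3, b3)]"

definition class_edge_list :: "'a sun list \<Rightarrow> ('a \<times> 'a) list" where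
  "class_edge_list T = concat (map sun_edge_list T)"

lemma edge_set_sun_edge_list: "edge_set (sun_edge_list t) = sun_edges t"
  by (cases t) (simp add: edge_set_def)

lemma edge_set_append: "edge_set (xs @ ys) = edge_set xs \<union> edge_set ys"
  by (simp add: edge_set_def image_Un)

lemma edge_set_concat: "edge_set (concat Ls) = (\<Union>i<length Ls. edge_set (Ls ! i))"
proof -
  have "set Ls = (!) Ls ` {..<length Ls}"
    by (auto simp: in_set_conv_nth)
  then show ?thesis
    by (simp add: edge_set_def image_UN)
qed

lemma class_edges_set: "class_edges (set T) = edge_set (class_edge_list T)"
  by (auto simp: class_edges_def class_edge_list_def edge_set_def
      simp flip: edge_set_sun_edge_list)

lemma finite_complete_edges: "finite V \<Longrightarrow> finite (complete_edges V)"
  by (rule finite_subset[of _ "Pow V"]) (auto simp: complete_edges_def)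

lemma card_complete_edges:
  assumes "finite V"
  shows "card (complete_edges V) = card V choose 2"
proof -
  have "complete_edges V = {B. B \<subseteq> V \<and> card B = 2}"
    by (auto simp: complete_edges_def card_2_iff)
  with assms show ?thesis by (simp add: n_subsets)
qed

lemma sun_class_edges_subset:
  assumes "sun_class V P"
  shows "class_edges P \<subseteq> complete_edges V"
proof
  fix e assume "e \<in> class_edges P"
  then obtain t where "t \<in> P" "e \<in> sun_edges t"
    by (auto simp: class_edges_def)
  moreover from \<open>t \<in> P\<close> assms have "is_sun t" "sun_verts t \<subseteq> V"
    by (auto simp: sun_class_def)
  ultimately show "e \<in> complete_edges V"
    by (cases t) (auto simp: complete_edges_def)
qed

lemma distinct_concat_nth_disjoint:
  assumes "distinct (concat Ls)" "i < length Ls" "j < length Ls" "i \<noteq> j"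
  shows "set (Ls ! i) \<inter> set (Ls ! j) = {}"
  using assms
proof (induction Ls arbitrary: i j)
  case (Cons L Ls)
  have head: "set L \<inter> set (Ls ! k) = {}" if "k < length Ls" for k
    using Cons.prems(1) nth_mem[OF that] by auto
  show ?case
  proof (cases i)
    case 0
    with Cons.prems(3,4) obtain j' where "j = Suc j'" "j' < length Ls"
      by (cases j) auto
    with 0 head show ?thesis by simp
  next
    case (Suc i')
    show ?thesis
    proof (cases j)
      case 0
      with Suc Cons.prems(2) head[of i'] show ?thesis by auto
    next
      case (Suc j')
      with \<open>i = Suc i'\<close> Cons.prems Cons.IH[of i' j'] show ?thesis by simp
    qed
  qed
qed simp

lemma distinct_edges_concat_nth_disjoint:
  assumes "distinct (map edge (concat Ls))" "i < length Ls" "j < length Ls" "i \<noteq> j"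
  shows "edge_set (Ls ! i) \<inter> edge_set (Ls ! j) = {}"
  using distinct_concat_nth_disjoint[of "map (map edge) Ls" i j] assms
  by (simp add: map_concat edge_set_def)

lemma length_filter_eq_1_ex1:
  assumes "length (filter P xs) = 1"
  shows "\<exists>!x. x \<in> set xs \<and> P x"
proof -
  from assms obtain p where "filter P xs = [p]"
    by (auto simp: length_Suc_conv)
  then have "{x \<in> set xs. P x} = {p}"
    by (metis set_filter list.set(1,2))
  then show ?thesis
    by (intro ex1I[of _ p]) blast+
qed

definition factor_list :: "'a set \<Rightarrow> ('a \<times> 'a) list \<Rightarrow> bool" where
  "factor_list V L \<longleftrightarrow> (\<forall>(a, b)\<in>set L. a \<in> V \<and> b \<in> V \<and> a \<noteq> b) \<and>
     (\<forall>v\<in>V. length (filter (\<lambda>p. v \<in> edge p) L) = 1)"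

definition sun_class_list :: "'a set \<Rightarrow> 'a sun list \<Rightarrow> bool" where
  "sun_class_list V T \<longleftrightarrow> (\<forall>t\<in>set T. is_sun t \<and> sun_verts t \<subseteq> V) \<and>
     (\<forall>v\<in>V. length (filter (\<lambda>t. v \<in> sun_verts t) T) = 1)"

lemma one_factor_edge_set:
  assumes "factor_list V L"
  shows "one_factor V (edge_set L)"
  unfolding one_factor_def
proof
  show "edge_set L \<subseteq> complete_edges V"
  proof
    fix e assume "e \<in> edge_set L"
    then obtain a b where "(a, b) \<in> set L" "e = {a, b}"
      by (auto simp: edge_set_def)
    moreover from this(1) assms have "a \<in> V" "b \<in> V" "a \<noteq> b"
      by (auto simp: factor_list_def)
    ultimately show "e \<in> complete_edges V"
      unfolding complete_edges_def by blast
  qed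
  show "\<forall>v\<in>V. \<exists>!e. e \<in> edge_set L \<and> v \<in> e"
  proof
    fix v assume "v \<in> V"
    with assms have "length (filter (\<lambda>p. v \<in> edge p) L) = 1"
      by (simp add: factor_list_def)
    then have "\<exists>!p. p \<in> set L \<and> v \<in> edge p"
      by (rule length_filter_eq_1_ex1)
    then obtain p where p: "p \<in> set L" "v \<in> edge p"
      and unique: "\<And>q. q \<in> set L \<Longrightarrow> v \<in> edge q \<Longrightarrow> q = p"
      by blast
    show "\<exists>!e. e \<in> edge_set L \<and> v \<in> e"
    proof (rule ex1I[of _ "edge p"])
      show "edge p \<in> edge_set L \<and> v \<in> edge p"
        using p by (simp add: edge_set_def)
      fix e assume "e \<in> edge_set L \<and> v \<in> e"
      then obtain q where "q \<in> set L" "v \<in> edge q" "e = edge q"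
        by (auto simp: edge_set_def)
      then show "e = edge p"
        using unique by simp
    qed
  qed
qed

lemma sun_class_set:
  assumes "sun_class_list V T"
  shows "sun_class V (set T)"
  unfolding sun_class_def
proof
  show "\<forall>t\<in>set T. is_sun t \<and> sun_verts t \<subseteq> V"
    using assms by (simp add: sun_class_list_def)
  show "\<forall>v\<in>V. \<exists>!t. t \<in> set T \<and> v \<in> sun_verts t"
  proof
    fix v assume "v \<in> V"
    with assms have "length (filter (\<lambda>t. v \<in> sun_verts t) T) = 1"
      by (simp add: sun_class_list_def)
    then show "\<exists>!t. t \<in> set T \<and> v \<in> sun_verts t"
      by (rule length_filter_eq_1_ex1)
  qed
qed

definition all_edges :: "('a \<times> 'a) list list \<Rightarrow> 'a sun list list \<Rightarrow> ('a \<times> 'a) list" where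
  "all_edges Ms Ps = concat Ms @ concat (map class_edge_list Ps)"

lemma URD_decomp_of_lists:
  fixes Ms :: "('a \<times> 'a) list list" and Ps :: "'a sun list list"
  assumes "finite V"
    and factors: "\<forall>L\<in>set Ms. one_factor V (edge_set L)"
    and classes: "\<forall>T\<in>set Ps. sun_class V (set T)"
    and distinct_edges: "distinct (map edge (all_edges Ms Ps))"
    and edge_count: "length (all_edges Ms Ps) = card V choose 2"
  shows "URD_decomp V (length Ms) (length Ps)"
proof -
  define Ls where "Ls = Ms @ map class_edge_list Ps"
  have all_edges_Ls: "all_edges Ms Ps = concat Ls"
    by (simp add: Ls_def all_edges_def)
  have Ls_Ms: "Ls ! i = Ms ! i" if "i < length Ms" for i
    using that by (simp add: Ls_def nth_append)
  have Ls_Ps: "Ls ! (length Ms + j) = class_edge_list (Ps ! j)" if "j < length Ps" for j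
    using that by (simp add: Ls_def nth_append)
  have length_Ls: "length Ls = length Ms + length Ps"
    by (simp add: Ls_def)
  have disjoint: "edge_set (Ls ! i) \<inter> edge_set (Ls ! j) = {}"
    if "i < length Ls" "j < length Ls" "i \<noteq> j" for i j
    using distinct_edges that
    by (intro distinct_edges_concat_nth_disjoint) (simp_all add: all_edges_Ls)
  have union: "edge_set (concat Ls) =
      (\<Union>i<length Ms. edge_set (Ms ! i)) \<union> (\<Union>j<length Ps. class_edges (set (Ps ! j)))"
    by (simp add: Ls_def edge_set_append edge_set_concat class_edges_set)
  have "edge_set (Ms ! i) \<subseteq> complete_edges V" if "i < length Ms" for i
    using factors nth_mem[OF that] by (simp add: one_factor_def)
  moreover have "class_edges (set (Ps ! j)) \<subseteq> complete_edges V" if "j < length Ps" for j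
    using classes nth_mem[OF that] by (simp add: sun_class_edges_subset)
  ultimately have "edge_set (concat Ls) \<subseteq> complete_edges V"
    unfolding union by blast
  moreover have "card (edge_set (concat Ls)) = card (complete_edges V)"
    using distinct_card[OF distinct_edges] edge_count \<open>finite V\<close>
    by (simp add: all_edges_Ls edge_set_def card_complete_edges)
  ultimately have cover: "edge_set (concat Ls) = complete_edges V"
    using \<open>finite V\<close> by (intro card_subset_eq finite_complete_edges)
  show ?thesis
    unfolding URD_decomp_def
  proof (intro exI[of _ "\<lambda>i. edge_set (Ms ! i)"] exI[of _ "\<lambda>j. set (Ps ! j)"] conjI allI impI)
    show "one_factor V (edge_set (Ms ! i))" if "i < length Ms" for i
      using factors that by simp
    show "sun_class V (set (Ps ! j))" if "j < length Ps" for j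
      using classes that by simp
    show "edge_set (Ms ! i) \<inter> edge_set (Ms ! i') = {}"
      if "i < length Ms" "i' < length Ms" "i \<noteq> i'" for i i'
      using disjoint[of i i'] that by (simp add: Ls_Ms length_Ls)
    show "class_edges (set (Ps ! j)) \<inter> class_edges (set (Ps ! j')) = {}"
      if "j < length Ps" "j' < length Ps" "j \<noteq> j'" for j j'
      using disjoint[of "length Ms + j" "length Ms + j'"] that
      by (simp add: Ls_Ps length_Ls class_edges_set)
    show "edge_set (Ms ! i) \<inter> class_edges (set (Ps ! j)) = {}"
      if "i < length Ms" "j < length Ps" for i j
      using disjoint[of i "length Ms + j"] that
      by (simp add: Ls_Ms Ls_Ps length_Ls class_edges_set)
    show "(\<Union>i<length Ms. edge_set (Ms ! i)) \<union> (\<Union>j<length Ps. class_edges (set (Ps ! j)))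
        = complete_edges V"
      using cover union by simp
  qed
qed

definition URD_certificate :: "'a set \<Rightarrow> ('a \<times> 'a) list list \<Rightarrow> 'a sun list list \<Rightarrow> bool" where
  "URD_certificate V Ms Ps \<longleftrightarrow>
     (\<forall>L\<in>set Ms. factor_list V L) \<and> (\<forall>T\<in>set Ps. sun_class_list V T) \<and>
     distinct (map edge (all_edges Ms Ps)) \<and> length (all_edges Ms Ps) = card V choose 2"

lemma URD_decomp_if_certificate:
  "finite V \<Longrightarrow> URD_certificate V Ms Ps \<Longrightarrow> URD_decomp V (length Ms) (length Ps)"
  by (rule URD_decomp_of_lists) (auto simp: URD_certificate_def one_factor_edge_set sun_class_set)

text \<open>Factor \<open>i\<close> of the round-robin 1-factorization of \<open>K_(m+1)\<close>, \<open>m\<close> odd: vertex \<open>m\<close> is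
  matched with \<open>i\<close>, and \<open>i + k\<close> with \<open>i - k\<close> modulo \<open>m\<close>.\<close>
definition round_robin_factor :: "nat \<Rightarrow> nat \<Rightarrow> (nat \<times> nat) list" where
  "round_robin_factor m i =
     (m, i) # [((i + k) mod m, (i + m - k) mod m). k \<leftarrow> [1..<(m + 1) div 2]]"

definition factors_3_4 :: "(nat \<times> nat) list list" where
  "factors_3_4 =
     [[(0, 5), (1, 8), (2, 10), (3, 4), (6, 7), (9, 11)],
      [(0, 7), (1, 2), (3, 5), (4, 9), (6, 8), (10, 11)],
      [(0, 8), (1, 11), (2, 7), (3, 6), (4, 10), (5, 9)]]"

definition sun_classes_3_4 :: "nat sun list list" where
  "sun_classes_3_4 =
     [[(8, 3, 11, 4, 0, 2), (10, 5, 6, 1, 7, 9)],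
      [(4, 6, 1, 7, 11, 5), (0, 2, 9, 10, 3, 8)],
      [(4, 0, 11, 2, 6, 5), (9, 10, 7, 1, 3, 8)],
      [(5, 8, 2, 4, 10, 6), (3, 7, 1, 9, 11, 0)]]"

definition factors_7_2 :: "(nat \<times> nat) list list" where
  "factors_7_2 =
     [[(0, 6), (1, 4), (2, 8), (3, 5), (7, 9), (10, 11)],
      [(0, 3), (1, 8), (2, 6), (4, 10), (5, 9), (7, 11)],
      [(0, 4), (1, 6), (2, 3), (5, 7), (8, 11), (9, 10)],
      [(0, 10), (1, 9), (2, 11), (3, 7), (4, 6), (5, 8)],
      [(0, 1), (2, 4), (3, 11), (5, 6), (7, 10), (8, 9)],
      [(0, 7), (1, 3), (2, 9), (4, 8), (5, 10), (6, 11)],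
      [(0, 8), (1, 11), (2, 7), (3, 10), (4, 5), (6, 9)]]"

definition sun_classes_7_2 :: "nat sun list list" where
  "sun_classes_7_2 =
     [[(0, 5, 11, 2, 1, 9), (6, 7, 8, 3, 4, 10)],
      [(10, 1, 2, 6, 7, 5), (4, 3, 9, 11, 8, 0)]]"

theorem lemma3p2:
  shows "{(3, 4), (7, 2), (11, 0)} \<subseteq> URD 12"
proof -
  have "URD_certificate {0..<12} factors_3_4 sun_classes_3_4"
    "URD_certificate {0..<12} factors_7_2 sun_classes_7_2"
    "URD_certificate {0..<12} (map (round_robin_factor 11) [0..<11]) []"
    unfolding factors_3_4_def sun_classes_3_4_def factors_7_2_def sun_classes_7_2_def
    by code_simp+
  then have "URD_decomp {0..<12::nat} (length factors_3_4) (length sun_classes_3_4)"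
    "URD_decomp {0..<12::nat} (length factors_7_2) (length sun_classes_7_2)"
    "URD_decomp {0..<12::nat} 11 0"
    using URD_decomp_if_certificate[of "{0..<12::nat}"] by fastforce+
  then show ?thesis
    by (simp add: URD_def factors_3_4_def sun_classes_3_4_def factors_7_2_def
        sun_classes_7_2_def eval_nat_numeral)
qed

end
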